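(* Let $G$ be a connected graph with $\delta(G)=1$, girth at least $15$, and $G\in\mathcal U$. Then no two single star support vertices of $G$ are at distance exactly $4$.
   Context: All graphs are finite and simple. A set $P\subseteq V(G)$ is an open packing if no two distinct vertices of $P$ have a common neighbor; it is maximal if maximal under inclusion among open packings. $\rho^o(G)$ is the maximum size of an open packing and $\rho^o_L(G)$ the minimum size of a maximal open packing; $\mathcal U$ is the class of graphs with $\rho^o_L(G)=\rho^o(G)$. A leaf is a vertex of degree $1$; a support vertex is a vertex adjacent to at least one leaf. A single star support vertex is a support vertex not adjacent to any other support vertex. *)

theory Defs
  imports Main
begin

definition graph :: "'a set \<Rightarrow> ('a \<Rightarrow> 'a \<Rightarrow> bool) \<Rightarrow> bool" where
  "graph V E \<longleftrightarrow> finite V \<and> (\<forall>u v. E u v \<longrightarrow> u \<in> V \<and> v \<in> V)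
     \<and> (\<forall>u v. E u v \<longrightarrow> E v u) \<and> (\<forall>v. \<not> E v v)"

definition nbhd :: "'a set \<Rightarrow> ('a \<Rightarrow> 'a \<Rightarrow> bool) \<Rightarrow> 'a \<Rightarrow> 'a set" where
  "nbhd V E v = {u \<in> V. E v u}"

definition deg :: "'a set \<Rightarrow> ('a \<Rightarrow> 'a \<Rightarrow> bool) \<Rightarrow> 'a \<Rightarrow> nat" where
  "deg V E v = card (nbhd V E v)"

definition min_deg :: "'a set \<Rightarrow> ('a \<Rightarrow> 'a \<Rightarrow> bool) \<Rightarrow> nat" where
  "min_deg V E = Min (deg V E ` V)"

definition walk :: "'a set \<Rightarrow> ('a \<Rightarrow> 'a \<Rightarrow> bool) \<Rightarrow> 'a list \<Rightarrow> bool" where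
  "walk V E p \<longleftrightarrow> p \<noteq> [] \<and> set p \<subseteq> V \<and> (\<forall>i. Suc i < length p \<longrightarrow> E (p ! i) (p ! Suc i))"

definition connected :: "'a set \<Rightarrow> ('a \<Rightarrow> 'a \<Rightarrow> bool) \<Rightarrow> bool" where
  "connected V E \<longleftrightarrow> V \<noteq> {} \<and>
     (\<forall>u\<in>V. \<forall>v\<in>V. \<exists>p. walk V E p \<and> hd p = u \<and> last p = v)"

definition dist :: "'a set \<Rightarrow> ('a \<Rightarrow> 'a \<Rightarrow> bool) \<Rightarrow> 'a \<Rightarrow> 'a \<Rightarrow> nat" where
  "dist V E u v = (LEAST n. \<exists>p. walk V E p \<and> hd p = u \<and> last p = v \<and> length p = Suc n)"

definition cycle :: "'a set \<Rightarrow> ('a \<Rightarrow> 'a \<Rightarrow> bool) \<Rightarrow> 'a list \<Rightarrow> bool" where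
  "cycle V E c \<longleftrightarrow> length c \<ge> 3 \<and> distinct c \<and> walk V E c \<and> E (last c) (hd c)"

text \<open>girth(G) \<ge> k (acyclic graphs have infinite girth).\<close>
definition girth_at_least :: "'a set \<Rightarrow> ('a \<Rightarrow> 'a \<Rightarrow> bool) \<Rightarrow> nat \<Rightarrow> bool" where
  "girth_at_least V E k \<longleftrightarrow> (\<forall>c. cycle V E c \<longrightarrow> length c \<ge> k)"

definition open_packing :: "'a set \<Rightarrow> ('a \<Rightarrow> 'a \<Rightarrow> bool) \<Rightarrow> 'a set \<Rightarrow> bool" where
  "open_packing V E P \<longleftrightarrow> P \<subseteq> V \<and>
     (\<forall>u\<in>P. \<forall>v\<in>P. u \<noteq> v \<longrightarrow> \<not> (\<exists>w. E u w \<and> E v w))"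

definition maximal_open_packing :: "'a set \<Rightarrow> ('a \<Rightarrow> 'a \<Rightarrow> bool) \<Rightarrow> 'a set \<Rightarrow> bool" where
  "maximal_open_packing V E P \<longleftrightarrow> open_packing V E P \<and>
     (\<forall>Q. open_packing V E Q \<and> P \<subseteq> Q \<longrightarrow> Q = P)"

definition open_packing_number :: "'a set \<Rightarrow> ('a \<Rightarrow> 'a \<Rightarrow> bool) \<Rightarrow> nat" where
  "open_packing_number V E = Max (card ` {P. open_packing V E P})"

definition lower_open_packing_number :: "'a set \<Rightarrow> ('a \<Rightarrow> 'a \<Rightarrow> bool) \<Rightarrow> nat" where
  "lower_open_packing_number V E = Min (card ` {P. maximal_open_packing V E P})"

definition in_U :: "'a set \<Rightarrow> ('a \<Rightarrow> 'a \<Rightarrow> bool) \<Rightarrow> bool" where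
  "in_U V E \<longleftrightarrow> lower_open_packing_number V E = open_packing_number V E"

definition leaf :: "'a set \<Rightarrow> ('a \<Rightarrow> 'a \<Rightarrow> bool) \<Rightarrow> 'a \<Rightarrow> bool" where
  "leaf V E v \<longleftrightarrow> v \<in> V \<and> deg V E v = 1"

definition support_vertex :: "'a set \<Rightarrow> ('a \<Rightarrow> 'a \<Rightarrow> bool) \<Rightarrow> 'a \<Rightarrow> bool" where
  "support_vertex V E v \<longleftrightarrow> v \<in> V \<and> (\<exists>u. E v u \<and> leaf V E u)"

definition single_star_support :: "'a set \<Rightarrow> ('a \<Rightarrow> 'a \<Rightarrow> bool) \<Rightarrow> 'a \<Rightarrow> bool" where
  "single_star_support V E v \<longleftrightarrow> support_vertex V E v \<and>
     \<not> (\<exists>u. E v u \<and> support_vertex V E u)"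

end

theory Submission
  imports Defs
begin

text \<open>Let \<open>u a b c v\<close> be a shortest path. For every path \<open>u y w\<close> with \<open>y \<noteq> a\<close> and
  \<open>w \<noteq> u\<close> (and likewise at \<open>v\<close>), the vertex \<open>w\<close> is not a leaf, since \<open>y\<close> is not a support
  vertex, and not a support vertex, since in \<open>\<U>\<close> no two support vertices have a common
  neighbour; hence the path continues without backtracking to some \<open>w x t\<close>. Choose one such
  \<open>t\<close> for every \<open>(y, w)\<close> and let \<open>T\<close> be the set of these vertices. As the girth is at least
  15, the two ends of a non-backtracking walk on at most 13 vertices are distinct and have no
  common neighbour, so \<open>{b} \<union> T\<close> and \<open>{u, v} \<union> T\<close> are open packings, and every vertex
  sharing a neighbour with \<open>{u, v} \<union> T\<close> shares one with \<open>{b} \<union> T\<close>. Extending \<open>{b} \<union> T\<close>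
  to a maximal open packing \<open>M\<close> and exchanging it inside \<open>M\<close> for \<open>{u, v} \<union> T\<close> yields an
  open packing larger than \<open>M\<close>, contradicting \<open>\<rho>\<^sup>o\<^sub>L = \<rho>\<^sup>o\<close>.\<close>

section \<open>Non-backtracking walks\<close>

lemma graph_sym: "graph V E \<Longrightarrow> E x y \<Longrightarrow> E y x"
  by (simp add: graph_def)

fun nonbacktracking :: "('a \<Rightarrow> 'a \<Rightarrow> bool) \<Rightarrow> 'a list \<Rightarrow> bool" where
  "nonbacktracking E (x # y # z # p) \<longleftrightarrow> E x y \<and> x \<noteq> z \<and> nonbacktracking E (y # z # p)"
| "nonbacktracking E [x, y] \<longleftrightarrow> E x y"
| "nonbacktracking E _ \<longleftrightarrow> True"

lemma nonbacktracking_conv_nth: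
  "nonbacktracking E p \<longleftrightarrow> successively E p \<and>
     (\<forall>i. Suc (Suc i) < length p \<longrightarrow> p ! i \<noteq> p ! Suc (Suc i))"
proof (induction E p rule: nonbacktracking.induct)
  case (1 E x y z p)
  have "(\<forall>i. Suc (Suc i) < length (x # y # z # p) \<longrightarrow>
           (x # y # z # p) ! i \<noteq> (x # y # z # p) ! Suc (Suc i)) \<longleftrightarrow>
        x \<noteq> z \<and> (\<forall>i. Suc (Suc i) < length (y # z # p) \<longrightarrow>
           (y # z # p) ! i \<noteq> (y # z # p) ! Suc (Suc i))"
    by (auto simp: nth_Cons split: nat.split dest: spec[of _ 0] spec[of _ "Suc _"])
  with 1 show ?case by auto
qed auto

lemma nonbacktracking_successively: "nonbacktracking E p \<Longrightarrow> successively E p"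
  by (simp add: nonbacktracking_conv_nth)

lemma nonbacktracking_Cons: "nonbacktracking E (x # p) \<Longrightarrow> nonbacktracking E p"
  by (induction E p rule: nonbacktracking.induct) auto

lemma nonbacktracking_drop: "nonbacktracking E p \<Longrightarrow> nonbacktracking E (drop n p)"
proof (induction n arbitrary: p)
  case (Suc n)
  then show ?case by (cases p) (auto dest: nonbacktracking_Cons)
qed simp

lemma nonbacktracking_appendD: "nonbacktracking E (p @ q) \<Longrightarrow> nonbacktracking E p"
proof (induction E p rule: nonbacktracking.induct)
  case (2 E x y)
  then show ?case by (cases q) auto
qed auto

lemma nonbacktracking_rev:
  assumes sym: "\<And>x y. E x y \<Longrightarrow> E y x" and p: "nonbacktracking E p"
  shows "nonbacktracking E (rev p)"
  unfolding nonbacktracking_conv_nth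
proof (intro conjI allI impI)
  show "successively E (rev p)"
    using p by (auto simp: nonbacktracking_conv_nth intro: successively_mono sym)
  fix i assume "Suc (Suc i) < length (rev p)"
  then show "rev p ! i \<noteq> rev p ! Suc (Suc i)"
    using p unfolding nonbacktracking_conv_nth
    by (auto simp: rev_nth dest!: spec[of _ "length p - Suc (Suc (Suc i))"])
       (simp add: Suc_diff_Suc numeral_2_eq_2)
qed

lemma nonbacktracking_glue:
  "nonbacktracking E (p @ [y, z]) \<Longrightarrow> nonbacktracking E (y # z # q) \<Longrightarrow>
     nonbacktracking E (p @ y # z # q)"
proof (induction p rule: induct_list012)
  case (3 x x' p)
  then show ?case by (cases p) auto
qed auto

lemma walk_if_successively:
  assumes G: "graph V E" and p: "successively E p" and len: "2 \<le> length p"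
  shows "walk V E p"
  unfolding walk_def
proof (intro conjI)
  have edge: "\<And>i. Suc i < length p \<Longrightarrow> E (p ! i) (p ! Suc i)"
    using p by (simp add: successively_nth)
  then show "\<forall>i. Suc i < length p \<longrightarrow> E (p ! i) (p ! Suc i)" by blast
  show "p \<noteq> []" using len by auto
  show "set p \<subseteq> V"
  proof
    fix x assume "x \<in> set p"
    then obtain i where i: "i < length p" "x = p ! i" by (auto simp: in_set_conv_nth)
    show "x \<in> V"
    proof (cases "Suc i < length p")
      case True
      then show ?thesis using edge[of i] G i by (simp add: graph_def)
    next
      case False
      then have "Suc (i - 1) < length p" "i = Suc (i - 1)" using i len by auto
      then show ?thesis using edge[of "i - 1"] G i by (metis graph_def)
    qed
  qed
qed

lemma cycle_of_nonbacktracking_segment: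
  assumes G: "graph V E" and p: "nonbacktracking E p"
    and d: "0 < d" "k + d < length p" "p ! k = p ! (k + d)"
    and distinct: "distinct (take d (drop k p))"
  shows "cycle V E (take d (drop k p))"
proof -
  define c where "c = take d (drop k p)"
  have edge: "\<And>n. Suc n < length p \<Longrightarrow> E (p ! n) (p ! Suc n)"
    using p by (simp add: nonbacktracking_conv_nth successively_nth)
  have len_c: "length c = d" using d by (simp add: c_def)
  have c_nth: "\<And>n. n < d \<Longrightarrow> c ! n = p ! (k + n)" using d by (simp add: c_def)
  have "d \<noteq> 1"
    using edge[of k] d G by (auto simp: graph_def)
  moreover have "d \<noteq> 2"
    using p d by (auto simp: nonbacktracking_conv_nth numeral_2_eq_2)
  ultimately have "3 \<le> d" using d by linarith
  moreover have "walk V E c"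
  proof (rule walk_if_successively[OF G])
    show "successively E c"
      unfolding successively_conv_nth len_c using c_nth edge d by auto
  qed (use \<open>3 \<le> d\<close> len_c in simp)
  moreover have "E (last c) (hd c)"
  proof -
    have "last c = c ! (d - 1)"
      using d len_c by (subst last_conv_nth) auto
    also have "\<dots> = p ! (k + (d - 1))"
      using c_nth d by simp
    finally have "last c = p ! (k + (d - 1))" .
    moreover have "hd c = p ! Suc (k + (d - 1))"
      using c_nth[of 0] d len_c by (subst hd_conv_nth) auto
    ultimately show ?thesis using edge[of "k + (d - 1)"] d by simp
  qed
  ultimately show ?thesis
    using distinct len_c unfolding c_def cycle_def by simp
qed

lemma cycle_in_nonbacktracking_walk:
  assumes G: "graph V E" and p: "nonbacktracking E p"
    and ij: "i < j" "j < length p" and repeat: "p ! i = p ! j"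
  shows "\<exists>c. cycle V E c \<and> length c \<le> j - i"
proof -
  define gap where "gap d \<longleftrightarrow> 0 < d \<and> (\<exists>k. k + d < length p \<and> p ! k = p ! (k + d))" for d
  have "gap (j - i)" unfolding gap_def using ij repeat by (intro conjI exI[of _ i]) auto
  define d where "d = (LEAST d. gap d)"
  have "gap d" unfolding d_def by (rule LeastI) fact
  then obtain k where d: "0 < d" "k + d < length p" "p ! k = p ! (k + d)"
    unfolding gap_def by blast
  have "d \<le> j - i" unfolding d_def by (rule Least_le) fact
  have "take d (drop k p) ! m \<noteq> take d (drop k p) ! n" if "m < n" "n < d" for m n
  proof
    assume "take d (drop k p) ! m = take d (drop k p) ! n"
    then have "gap (n - m)"
      unfolding gap_def using that d by (intro conjI exI[of _ "k + m"]) auto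
    then have "d \<le> n - m" unfolding d_def by (rule Least_le)
    then show False using that by linarith
  qed
  then have "distinct (take d (drop k p))"
    using d by (simp add: distinct_conv_nth) (metis linorder_neqE_nat)
  then have "cycle V E (take d (drop k p))"
    by (rule cycle_of_nonbacktracking_segment[OF G p d])
  then show ?thesis using \<open>d \<le> j - i\<close> d by auto
qed

lemma closed_nonbacktracking_walk_longer_than_girth:
  assumes G: "graph V E" and girth: "girth_at_least V E k" and p: "nonbacktracking E p"
    and len: "2 \<le> length p" and closed: "hd p = last p"
  shows "k < length p"
proof -
  have "p \<noteq> []" using len by auto
  then have repeat: "p ! 0 = p ! (length p - 1)"
    using closed by (simp add: hd_conv_nth last_conv_nth)
  have "0 < length p - 1" "length p - 1 < length p" using len by auto
  then obtain c where "cycle V E c" "length c \<le> length p - 1"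
    using cycle_in_nonbacktracking_walk[OF G p _ _ repeat] by auto
  moreover from \<open>cycle V E c\<close> have "k \<le> length c"
    using girth by (simp add: girth_at_least_def)
  ultimately show ?thesis using len by linarith
qed

lemma nonbacktracking_rev_join:
  assumes sym: "\<And>x y. E x y \<Longrightarrow> E y x"
    and p: "nonbacktracking E (z # p)" and q: "nonbacktracking E (z # q)"
    and "p \<noteq> []" "q \<noteq> []" "hd p \<noteq> hd q"
  shows "nonbacktracking E (rev p @ z # q)"
proof -
  obtain h1 p1 h2 q1 where p_eq: "p = h1 # p1" and q_eq: "q = h2 # q1"
    using \<open>p \<noteq> []\<close> \<open>q \<noteq> []\<close> by (meson neq_Nil_conv)
  have "nonbacktracking E (rev (z # p))"
    using nonbacktracking_rev[of E, OF sym p] .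
  moreover have "E h1 z" "E z h2"
    using p q p_eq q_eq sym by (auto dest!: nonbacktracking_successively)
  ultimately have "nonbacktracking E (rev p1 @ [h1, z, h2])"
    using nonbacktracking_glue[of E "rev p1" h1 z "[h2]"] p_eq q_eq \<open>hd p \<noteq> hd q\<close> by simp
  then have "nonbacktracking E ((rev p1 @ [h1]) @ z # h2 # q1)"
    using nonbacktracking_glue[of E "rev p1 @ [h1]" z h2 q1] q q_eq by simp
  then show ?thesis using p_eq q_eq by simp
qed

lemma short_nonbacktracking_walks_unique:
  assumes G: "graph V E" and girth: "girth_at_least V E k"
  shows "nonbacktracking E p \<Longrightarrow> nonbacktracking E q \<Longrightarrow> p \<noteq> [] \<Longrightarrow> q \<noteq> [] \<Longrightarrow>
    hd p = hd q \<Longrightarrow> last p = last q \<Longrightarrow> length p + length q \<le> k + 1 \<Longrightarrow> p = q"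
proof (induction p arbitrary: q)
  case (Cons z p0)
  obtain q0 where q: "q = z # q0" using Cons.prems by (cases q) auto
  have closed_short: "r = [hd r]"
    if "nonbacktracking E r" "r \<noteq> []" "hd r = last r" "length r \<le> k" for r
    using closed_nonbacktracking_walk_longer_than_girth[OF G girth that(1) _ that(3)] that(2,4)
    by (cases r) (auto simp: Suc_le_eq)
  consider "p0 = []" | "q0 = []" | "p0 \<noteq> []" "q0 \<noteq> []" "hd p0 = hd q0"
    | "p0 \<noteq> []" "q0 \<noteq> []" "hd p0 \<noteq> hd q0"
    by blast
  then show ?case
  proof cases
    case 1
    then have "q = [hd q]" using Cons.prems q by (intro closed_short) auto
    then show ?thesis using 1 q by simp
  next
    case 2
    then have "z # p0 = [hd (z # p0)]" using Cons.prems q by (intro closed_short) auto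
    then show ?thesis using 2 q by simp
  next
    case 3
    have "nonbacktracking E p0" "nonbacktracking E q0"
      using Cons.prems(1,2) q by (auto dest: nonbacktracking_Cons)
    moreover have "last p0 = last q0" "length p0 + length q0 \<le> k + 1"
      using Cons.prems(6,7) q 3 by auto
    ultimately show ?thesis using Cons.IH 3 q by blast
  next
    case 4
    then have "nonbacktracking E (rev p0 @ z # q0)"
      using nonbacktracking_rev_join[of E, OF graph_sym[OF G]] Cons.prems(1,2) q by blast
    moreover have "hd (rev p0 @ z # q0) = last (rev p0 @ z # q0)"
      using Cons.prems(6) q 4 by (simp add: hd_rev)
    moreover have "length (rev p0 @ z # q0) \<le> k"
      using Cons.prems(7) q by simp
    ultimately have "rev p0 @ z # q0 = [hd (rev p0 @ z # q0)]"
      by (intro closed_short) auto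
    then show ?thesis using 4 by (cases p0) auto
  qed
qed simp

lemma nonbacktracking_walk_ends_apart:
  assumes G: "graph V E" and girth: "girth_at_least V E k" and p: "nonbacktracking E p"
    and len: "4 \<le> length p" "length p + 2 \<le> k"
  shows "hd p \<noteq> last p" and "\<not> (E (hd p) m \<and> E (last p) m)"
proof -
  show "hd p \<noteq> last p"
    using closed_nonbacktracking_walk_longer_than_girth[OF G girth p] len by auto
  show "\<not> (E (hd p) m \<and> E (last p) m)"
  proof
    assume m: "E (hd p) m \<and> E (last p) m"
    obtain p' y t where p': "p = p' @ [y, t]"
      using len by (cases p rule: rev_cases; cases "butlast p" rule: rev_cases) auto
    have hd_m: "nonbacktracking E [hd p, m]" using m by simp
    show False
    proof (cases "y = m")
      case True
      have "nonbacktracking E (p' @ [y])"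
        using p p' nonbacktracking_appendD[of E "p' @ [y]" "[t]"] by simp
      then have "p' @ [y] = [hd p, m]"
        using short_nonbacktracking_walks_unique[OF G girth _ hd_m] p' True len
        by (cases p') auto
      then have "length (p' @ [y]) = 2" by simp
      then show False using p' len by simp
    next
      case False
      have "E y t"
        using p p' by (simp add: nonbacktracking_conv_nth successively_append_iff)
      then have "nonbacktracking E (p' @ [y, t, m])"
        using nonbacktracking_glue[of E p' y t "[m]"] p p' m False by simp
      then have "p' @ [y, t, m] = [hd p, m]"
        using short_nonbacktracking_walks_unique[OF G girth _ hd_m] p' len
        by (cases p') auto
      then show False by (cases p') auto
    qed
  qed
qed

lemma nonbacktracking_walk_last_apart:
  assumes G: "graph V E" and girth: "girth_at_least V E k" and p: "nonbacktracking E p"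
    and len: "i + 4 \<le> length p" "length p + 2 \<le> k"
  shows "p ! i \<noteq> last p" and "\<not> (E (p ! i) m \<and> E (last p) m)"
  using nonbacktracking_walk_ends_apart[OF G girth nonbacktracking_drop[OF p, of i]] len
  by (simp_all add: hd_drop_conv_nth)

section \<open>Open packings\<close>

lemma open_packingI:
  assumes "S \<subseteq> V" and "\<And>x y m. x \<in> S \<Longrightarrow> y \<in> S \<Longrightarrow> x \<noteq> y \<Longrightarrow> E x m \<Longrightarrow> E y m \<Longrightarrow> False"
  shows "open_packing V E S"
  using assms unfolding open_packing_def by blast

lemma open_packingD:
  "open_packing V E S \<Longrightarrow> x \<in> S \<Longrightarrow> y \<in> S \<Longrightarrow> x \<noteq> y \<Longrightarrow> E x m \<Longrightarrow> E y m \<Longrightarrow> False"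
  unfolding open_packing_def by blast

lemma open_packing_insertI:
  assumes "open_packing V E S" and "x \<in> V" and "\<And>s m. s \<in> S \<Longrightarrow> \<not> (E x m \<and> E s m)"
  shows "open_packing V E (insert x S)"
  using assms unfolding open_packing_def by blast

lemma open_packing_finite: "graph V E \<Longrightarrow> open_packing V E S \<Longrightarrow> finite S"
  unfolding graph_def open_packing_def by (auto intro: finite_subset)

lemma finite_open_packings: "graph V E \<Longrightarrow> finite {S. open_packing V E S}"
  by (rule finite_subset[of _ "Pow V"]) (auto simp: open_packing_def graph_def)

lemma open_packing_extends_to_maximal:
  assumes G: "graph V E" and S: "open_packing V E S"
  obtains M where "maximal_open_packing V E M" and "S \<subseteq> M"
proof -
  define C where "C = {P. open_packing V E P \<and> S \<subseteq> P}"
  have "finite C"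
    unfolding C_def using finite_open_packings[OF G] by (rule finite_subset[rotated]) auto
  moreover have "S \<in> C" using S by (simp add: C_def)
  ultimately have "\<exists>M\<in>C. S \<subseteq> M \<and> (\<forall>Q\<in>C. M \<subseteq> Q \<longrightarrow> M = Q)"
    by (rule finite_has_maximal2)
  then obtain M where "M \<in> C" "S \<subseteq> M" "\<forall>Q\<in>C. M \<subseteq> Q \<longrightarrow> M = Q" by blast
  then have "maximal_open_packing V E M"
    unfolding maximal_open_packing_def C_def by blast
  then show thesis using \<open>S \<subseteq> M\<close> by (rule that)
qed

lemma open_packing_exchange:
  assumes M: "open_packing V E M" and "S \<subseteq> M" and T: "open_packing V E T"
    and T_nonisolated: "\<And>t. t \<in> T \<Longrightarrow> \<exists>m. E t m"
    and cover: "\<And>t m z. t \<in> T \<Longrightarrow> E t m \<Longrightarrow> E z m \<Longrightarrow> \<exists>s\<in>S. \<exists>m'. E s m' \<and> E z m'"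
  shows "open_packing V E (T \<union> (M - S))" and "T \<inter> (M - S) = {}"
proof -
  have apart: "\<not> (E t m \<and> E x m)" if "t \<in> T" "x \<in> M - S" for t x m
  proof
    assume "E t m \<and> E x m"
    then obtain s m' where "s \<in> S" "E s m'" "E x m'" using cover \<open>t \<in> T\<close> by blast
    moreover have "s \<noteq> x" using \<open>s \<in> S\<close> \<open>x \<in> M - S\<close> by blast
    ultimately show False
      using open_packingD[OF M] \<open>S \<subseteq> M\<close> \<open>x \<in> M - S\<close> by blast
  qed
  show "T \<inter> (M - S) = {}"
  proof (rule ccontr)
    assume "T \<inter> (M - S) \<noteq> {}"
    then obtain t where "t \<in> T" "t \<in> M - S" by blast
    moreover obtain m where "E t m" using T_nonisolated \<open>t \<in> T\<close> by blast
    ultimately show False using apart by blast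
  qed
  show "open_packing V E (T \<union> (M - S))"
  proof (rule open_packingI)
    show "T \<union> (M - S) \<subseteq> V" using T M by (auto simp: open_packing_def)
    fix x y m assume xy: "x \<in> T \<union> (M - S)" "y \<in> T \<union> (M - S)" "x \<noteq> y" and m: "E x m" "E y m"
    consider "x \<in> T" "y \<in> T" | "x \<in> M" "y \<in> M" | "x \<in> T" "y \<in> M - S" | "x \<in> M - S" "y \<in> T"
      using xy by blast
    then show False
      using open_packingD[OF T _ _ \<open>x \<noteq> y\<close> m] open_packingD[OF M _ _ \<open>x \<noteq> y\<close> m]
        apart[of x y m] apart[of y x m] m
      by cases blast+
  qed
qed

lemma in_U_open_packing_exchange:
  assumes G: "graph V E" and U: "in_U V E"
    and S: "open_packing V E S" and T: "open_packing V E T"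
    and T_nonisolated: "\<And>t. t \<in> T \<Longrightarrow> \<exists>m. E t m"
    and cover: "\<And>t m z. t \<in> T \<Longrightarrow> E t m \<Longrightarrow> E z m \<Longrightarrow> \<exists>s\<in>S. \<exists>m'. E s m' \<and> E z m'"
  shows "card T \<le> card S"
proof -
  obtain M where M: "maximal_open_packing V E M" and "S \<subseteq> M"
    using open_packing_extends_to_maximal[OF G S] .
  have M_packing: "open_packing V E M" using M by (simp add: maximal_open_packing_def)
  note exchange = open_packing_exchange[OF M_packing \<open>S \<subseteq> M\<close> T T_nonisolated cover]
  have "card (T \<union> (M - S)) \<le> open_packing_number V E"
    unfolding open_packing_number_def using finite_open_packings[OF G] exchange(1)
    by (intro Max_ge) auto
  also have "\<dots> = lower_open_packing_number V E"
    using U by (simp add: in_U_def)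
  also have "\<dots> \<le> card M"
  proof -
    have "finite {P. maximal_open_packing V E P}"
      using finite_open_packings[OF G]
      by (rule finite_subset[rotated]) (auto simp: maximal_open_packing_def)
    then show ?thesis
      unfolding lower_open_packing_number_def using M by (intro Min_le) auto
  qed
  finally have "card T + card (M - S) \<le> card M"
    using exchange(2) open_packing_finite[OF G] T M_packing
    by (simp add: card_Un_disjoint)
  moreover have "card (M - S) = card M - card S" "card S \<le> card M"
    using \<open>S \<subseteq> M\<close> open_packing_finite[OF G M_packing]
    by (auto simp: card_Diff_subset finite_subset card_mono)
  ultimately show ?thesis by linarith
qed

section \<open>Support vertices and distance\<close>

lemma leaf_neighbour_unique:
  assumes G: "graph V E" and l: "leaf V E l" and "E l m" "E l m'"
  shows "m = m'"
proof -
  obtain x where "nbhd V E l = {x}"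
    using l by (auto simp: leaf_def deg_def card_Suc_eq)
  moreover have "m \<in> nbhd V E l" "m' \<in> nbhd V E l"
    using G \<open>E l m\<close> \<open>E l m'\<close> by (auto simp: nbhd_def graph_def)
  ultimately show ?thesis by simp
qed

lemma other_neighbour_of_non_leaf:
  assumes G: "graph V E" and "E v y" and "\<not> leaf V E v"
  obtains x where "E v x" and "x \<noteq> y"
proof -
  have "v \<in> V" "y \<in> nbhd V E v"
    using G \<open>E v y\<close> by (auto simp: graph_def nbhd_def)
  moreover have "nbhd V E v \<noteq> {y}"
    using \<open>\<not> leaf V E v\<close> \<open>v \<in> V\<close> by (auto simp: leaf_def deg_def)
  ultimately obtain x where "x \<in> nbhd V E v" "x \<noteq> y" by blast
  then show thesis using that by (auto simp: nbhd_def)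
qed

lemma in_U_support_vertices_no_common_neighbour:
  assumes G: "graph V E" and U: "in_U V E"
    and s1: "support_vertex V E s1" and s2: "support_vertex V E s2"
    and "E x s1" "E x s2"
  shows "s1 = s2"
proof (rule ccontr)
  assume "s1 \<noteq> s2"
  obtain l1 l2 where l1: "E s1 l1" "leaf V E l1" and l2: "E s2 l2" "leaf V E l2"
    using s1 s2 by (auto simp: support_vertex_def)
  have only1: "E l1 m \<Longrightarrow> m = s1" and only2: "E l2 m \<Longrightarrow> m = s2" for m
    using leaf_neighbour_unique[OF G] graph_sym[OF G] l1 l2 by blast+
  have "l1 \<noteq> l2" using only1 graph_sym[OF G l2(1)] \<open>s1 \<noteq> s2\<close> by blast
  have "card {l1, l2} \<le> card {x}"
  proof (rule in_U_open_packing_exchange[OF G U])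
    show "open_packing V E {x}"
      using G \<open>E x s1\<close> by (simp add: open_packing_def graph_def)
    show "open_packing V E {l1, l2}"
    proof (rule open_packingI)
      show "{l1, l2} \<subseteq> V" using G l1 l2 by (simp add: leaf_def)
    qed (use only1 only2 \<open>s1 \<noteq> s2\<close> in blast)
    show "\<exists>m. E l m" if "l \<in> {l1, l2}" for l
      using that graph_sym[OF G] l1 l2 by blast
    show "\<exists>s\<in>{x}. \<exists>m'. E s m' \<and> E z m'" if "l \<in> {l1, l2}" "E l m" "E z m" for l m z
      using that only1 only2 \<open>E x s1\<close> \<open>E x s2\<close> by blast
  qed
  with \<open>l1 \<noteq> l2\<close> show False by simp
qed

lemma single_star_support_walk_extends:
  assumes G: "graph V E" and U: "in_U V E" and s: "single_star_support V E s"
    and walk: "nonbacktracking E [s, y, w]"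
  shows "\<exists>x t. nonbacktracking E [y, w, x, t]"
proof -
  have "E s y" "E y w" "s \<noteq> w" using walk by auto
  have "\<not> support_vertex V E y"
    using s \<open>E s y\<close> by (auto simp: single_star_support_def)
  then have "\<not> leaf V E w"
    using G \<open>E y w\<close> by (auto simp: support_vertex_def graph_def)
  then obtain x where "E w x" "x \<noteq> y"
    using other_neighbour_of_non_leaf[OF G graph_sym[OF G \<open>E y w\<close>]] by blast
  have "\<not> support_vertex V E w"
    using in_U_support_vertices_no_common_neighbour[OF G U, of s w y] s \<open>E s y\<close> \<open>E y w\<close>
      \<open>s \<noteq> w\<close> graph_sym[OF G] by (auto simp: single_star_support_def)
  then have "\<not> leaf V E x"
    using G \<open>E w x\<close> by (auto simp: support_vertex_def graph_def)
  then obtain t where "E x t" "t \<noteq> w"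
    using other_neighbour_of_non_leaf[OF G graph_sym[OF G \<open>E w x\<close>]] by blast
  then show ?thesis using \<open>E y w\<close> \<open>E w x\<close> \<open>x \<noteq> y\<close> by auto
qed

lemma dist_le_walk_length:
  assumes "walk V E p" and "hd p = u" and "last p = v"
  shows "dist V E u v \<le> length p - 1"
  unfolding dist_def
proof (rule Least_le)
  show "\<exists>q. walk V E q \<and> hd q = u \<and> last q = v \<and> length q = Suc (length p - 1)"
    using assms by (intro exI[of _ p]) (auto simp: walk_def)
qed

lemma shortest_walk_exists:
  assumes "connected V E" and "u \<in> V" and "v \<in> V"
  obtains p where "walk V E p" and "hd p = u" and "last p = v" and "length p = Suc (dist V E u v)"
proof -
  obtain q where "walk V E q" "hd q = u" "last q = v"
    using assms by (auto simp: connected_def)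
  then have "\<exists>n p. walk V E p \<and> hd p = u \<and> last p = v \<and> length p = Suc n"
    by (intro exI[of _ "length q - 1"] exI[of _ q]) (auto simp: walk_def)
  then have "\<exists>p. walk V E p \<and> hd p = u \<and> last p = v \<and> length p = Suc (dist V E u v)"
    unfolding dist_def by (rule LeastI_ex)
  then show thesis using that by blast
qed

lemma dist_4_nonbacktracking_path:
  assumes G: "graph V E" and conn: "connected V E" and "u \<in> V" "v \<in> V"
    and d: "dist V E u v = 4"
  obtains a b c where "nonbacktracking E [u, a, b, c, v]" and "\<And>m. E u m \<Longrightarrow> \<not> E v m"
proof -
  have no_common: "\<not> E v m" if "E u m" for m
  proof
    assume "E v m"
    then have "walk V E [u, m, v]"
      using G that by (intro walk_if_successively) (auto dest: graph_sym)
    then have "dist V E u v \<le> 2" using dist_le_walk_length by fastforce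
    with d show False by simp
  qed
  obtain p where p: "walk V E p" "hd p = u" "last p = v" "length p = 5"
    using shortest_walk_exists[OF conn \<open>u \<in> V\<close> \<open>v \<in> V\<close>] d by auto
  then obtain a b c where "p = [u, a, b, c, v]"
    by (auto simp: length_Suc_conv numeral_eq_Suc)
  moreover have "successively E p"
    using p by (simp add: walk_def successively_conv_nth)
  ultimately have "nonbacktracking E [u, a, b, c, v]"
    using no_common graph_sym[OF G] by auto
  then show thesis using no_common by (rule that)
qed

locale distance_four_pair =
  fixes V :: "'a set" and E :: "'a \<Rightarrow> 'a \<Rightarrow> bool" and u a b c v :: 'a
    and tip :: "'a \<Rightarrow> 'a \<Rightarrow> 'a"
  assumes graph: "graph V E" and girth: "girth_at_least V E 15"
    and path: "nonbacktracking E [u, a, b, c, v]"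
    and no_common_neighbour: "E u m \<Longrightarrow> \<not> E v m"
    and tip: "nonbacktracking E [a, u, y, w] \<or> nonbacktracking E [c, v, y, w] \<Longrightarrow>
      \<exists>x. nonbacktracking E [y, w, x, tip y w]"
begin

definition branch :: "'a \<Rightarrow> 'a \<Rightarrow> bool" where
  "branch y w \<longleftrightarrow> nonbacktracking E [a, u, y, w] \<or> nonbacktracking E [c, v, y, w]"

definition tips :: "'a set" where
  "tips = {tip y w | y w. branch y w}"

lemma edge_sym: "E x y \<Longrightarrow> E y x"
  using graph by (rule graph_sym)

lemma short_walk_last_apart:
  assumes "nonbacktracking E p" and "length p \<le> 13" and "i + 4 \<le> length p"
  shows "p ! i \<noteq> last p \<and> \<not> (E (p ! i) m \<and> E (last p) m)"
  using nonbacktracking_walk_last_apart[OF graph girth assms(1)] assms(2,3) by simp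

lemma tip_apart_from_path:
  assumes "branch y w" and "z \<in> {u, b, v}"
  shows "tip y w \<noteq> z \<and> \<not> (E z m \<and> E (tip y w) m)"
proof -
  obtain x where x: "nonbacktracking E [y, w, x, tip y w]"
    using tip assms(1) unfolding branch_def by blast
  have "nonbacktracking E [v, c, b, a, u, y, w, x, tip y w] \<or>
      nonbacktracking E [u, a, b, c, v, y, w, x, tip y w]"
    using assms(1) x path edge_sym unfolding branch_def by auto
  then obtain p where p: "nonbacktracking E p"
    and "p = [v, c, b, a, u, y, w, x, tip y w] \<or> p = [u, a, b, c, v, y, w, x, tip y w]"
    by blast
  then show ?thesis
    using assms(2) short_walk_last_apart[OF p, where m = m and i = 0]
      short_walk_last_apart[OF p, where m = m and i = 2]
      short_walk_last_apart[OF p, where m = m and i = 4] by auto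
qed

lemma tips_at_common_root_apart:
  assumes "nonbacktracking E [s, y1, w1, x1, t1]" and "nonbacktracking E [s, y2, w2, x2, t2]"
    and "(y1, w1) \<noteq> (y2, w2)"
  shows "\<not> (E t1 m \<and> E t2 m)"
proof (cases "y1 = y2")
  case True
  then have "nonbacktracking E [t1, x1, w1, y1, w2, x2, t2]"
    using assms edge_sym by auto
  from short_walk_last_apart[OF this, where i = 0 and m = m] show ?thesis by simp
next
  case False
  then have "nonbacktracking E [t1, x1, w1, y1, s, y2, w2, x2, t2]"
    using assms edge_sym by auto
  from short_walk_last_apart[OF this, where i = 0 and m = m] show ?thesis by simp
qed

lemma tips_apart:
  assumes "branch y1 w1" and "branch y2 w2" and "tip y1 w1 \<noteq> tip y2 w2"
  shows "\<not> (E (tip y1 w1) m \<and> E (tip y2 w2) m)"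
proof -
  obtain x1 x2 where x1: "nonbacktracking E [y1, w1, x1, tip y1 w1]"
    and x2: "nonbacktracking E [y2, w2, x2, tip y2 w2]"
    using tip assms(1,2) unfolding branch_def by meson
  have "(y1, w1) \<noteq> (y2, w2)" using assms(3) by auto
  consider "nonbacktracking E [a, u, y1, w1]" "nonbacktracking E [a, u, y2, w2]"
    | "nonbacktracking E [c, v, y1, w1]" "nonbacktracking E [c, v, y2, w2]"
    | "nonbacktracking E [a, u, y1, w1]" "nonbacktracking E [c, v, y2, w2]"
    | "nonbacktracking E [c, v, y1, w1]" "nonbacktracking E [a, u, y2, w2]"
    using assms(1,2) unfolding branch_def by blast
  then show ?thesis
  proof cases
    case 1
    then have "nonbacktracking E [u, y1, w1, x1, tip y1 w1]"
      and "nonbacktracking E [u, y2, w2, x2, tip y2 w2]"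
      using x1 x2 by auto
    then show ?thesis using \<open>(y1, w1) \<noteq> (y2, w2)\<close> by (rule tips_at_common_root_apart)
  next
    case 2
    then have "nonbacktracking E [v, y1, w1, x1, tip y1 w1]"
      and "nonbacktracking E [v, y2, w2, x2, tip y2 w2]"
      using x1 x2 by auto
    then show ?thesis using \<open>(y1, w1) \<noteq> (y2, w2)\<close> by (rule tips_at_common_root_apart)
  next
    case 3
    then have "nonbacktracking E [tip y1 w1, x1, w1, y1, u, a, b, c, v, y2, w2, x2, tip y2 w2]"
      using nonbacktracking_rev[OF edge_sym x1] nonbacktracking_rev[OF edge_sym 3(1)] x2 path
      by auto
    from short_walk_last_apart[OF this, where i = 0 and m = m] show ?thesis by simp
  next
    case 4
    then have "nonbacktracking E [tip y1 w1, x1, w1, y1, v, c, b, a, u, y2, w2, x2, tip y2 w2]"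
      using nonbacktracking_rev[OF edge_sym x1] nonbacktracking_rev[OF edge_sym 4(1)]
        nonbacktracking_rev[OF edge_sym path] x2 by auto
    from short_walk_last_apart[OF this, where i = 0 and m = m] show ?thesis by simp
  qed
qed

lemma tip_walk:
  assumes "t \<in> tips"
  obtains y w x where "branch y w" and "t = tip y w" and "nonbacktracking E [y, w, x, t]"
  using assms tip unfolding tips_def branch_def by blast

lemma open_packing_tips: "open_packing V E tips"
proof (rule open_packingI)
  show "tips \<subseteq> V"
    using graph by (auto elim!: tip_walk simp: graph_def)
qed (auto simp: tips_def dest: tips_apart)

lemma open_packing_insert_b_tips: "open_packing V E (insert b tips)"
  using open_packing_tips graph path tip_apart_from_path
  by (intro open_packing_insertI) (auto simp: tips_def graph_def)

lemma open_packing_insert_u_v_tips: "open_packing V E (insert u (insert v tips))"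
proof (intro open_packing_insertI)
  show "open_packing V E tips" by (rule open_packing_tips)
  show "u \<in> V" "v \<in> V"
    using graph path by (auto simp: graph_def)
qed (use tip_apart_from_path no_common_neighbour in \<open>auto simp: tips_def\<close>)

lemma tips_cover_path_ends:
  assumes "s \<in> {u, v}" and "E s m" and "E z m"
  shows "\<exists>s'\<in>insert b tips. \<exists>m'. E s' m' \<and> E z m'"
proof (cases "m \<in> {a, c} \<or> z = s")
  case True
  then have "E b a \<and> E z a \<or> E b c \<and> E z c"
    using assms path edge_sym no_common_neighbour by auto
  then show ?thesis by blast
next
  case False
  then have "branch m z"
    using assms path edge_sym unfolding branch_def by auto
  then obtain x where "nonbacktracking E [m, z, x, tip m z]" using tip unfolding branch_def by blast
  moreover have "tip m z \<in> tips" using \<open>branch m z\<close> by (auto simp: tips_def)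
  ultimately show ?thesis using edge_sym by auto
qed

lemma not_in_U: "\<not> in_U V E"
proof
  assume U: "in_U V E"
  have "card (insert u (insert v tips)) \<le> card (insert b tips)"
  proof (rule in_U_open_packing_exchange[OF graph U open_packing_insert_b_tips
        open_packing_insert_u_v_tips])
    show "\<exists>m. E s m" if "s \<in> insert u (insert v tips)" for s
      using that path edge_sym by (auto elim!: tip_walk) (meson edge_sym)
    show "\<exists>s'\<in>insert b tips. \<exists>m'. E s' m' \<and> E z m'"
      if "s \<in> insert u (insert v tips)" "E s m" "E z m" for s m z
      using that tips_cover_path_ends by blast
  qed
  moreover have "finite tips"
    using open_packing_finite[OF graph open_packing_tips] .
  moreover have "u \<noteq> v"
    using path no_common_neighbour by auto
  moreover have "z \<notin> tips" if "z \<in> {u, b, v}" for z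
    unfolding tips_def using that tip_apart_from_path by blast
  ultimately show False by simp
qed

end

theorem claim3:
  fixes V :: "'a set" and E :: "'a \<Rightarrow> 'a \<Rightarrow> bool"
  assumes "graph V E" and "connected V E" and "min_deg V E = 1"
    and "girth_at_least V E 15" and "in_U V E"
    and "single_star_support V E u" and "single_star_support V E v"
  shows "dist V E u v \<noteq> 4"
proof
  assume "dist V E u v = 4"
  moreover have "u \<in> V" "v \<in> V"
    using assms(6,7) by (auto simp: single_star_support_def support_vertex_def)
  ultimately obtain a b c where path: "nonbacktracking E [u, a, b, c, v]"
    and no_common: "\<And>m. E u m \<Longrightarrow> \<not> E v m"
    using dist_4_nonbacktracking_path[OF assms(1,2)] by metis
  have "\<forall>y w. \<exists>t. nonbacktracking E [a, u, y, w] \<or> nonbacktracking E [c, v, y, w] \<longrightarrow>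
      (\<exists>x. nonbacktracking E [y, w, x, t])"
    using single_star_support_walk_extends[OF assms(1,5)] assms(6,7) nonbacktracking_Cons
    by meson
  then obtain tip where "\<And>y w. nonbacktracking E [a, u, y, w] \<or> nonbacktracking E [c, v, y, w] \<Longrightarrow>
      \<exists>x. nonbacktracking E [y, w, x, tip y w]"
    by metis
  with assms(1,4) path no_common interpret distance_four_pair V E u a b c v tip
    by unfold_locales
  show False using not_in_U \<open>in_U V E\<close> by contradiction
qed

end
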